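(* Let $\mathscr{C}$ be any class of abstract monoids (closed under isomorphism), $\mathscr{A}$ an alphabet with $|\mathscr{A}| \geq 2$, and $k$ a positive integer. Let $p_n$ be the proportion of ordered monoid presentations over $\mathscr{A}$ with $k$ relations and sum relation length $n$ (respectively, maximum relation length $n$) which present monoids in $\mathscr{C}$, and let $q_n$ be the corresponding proportion of (unordered) monoid presentations over $\mathscr{A}$ with $k$ relations and sum (respectively, maximum) relation length $n$. Then $p_n - q_n \to 0$ as $n \to \infty$.
   Context: A monoid presentation $\langle \mathscr{A} \mid \mathscr{R} \rangle$ consists of an alphabet $\mathscr{A}$ and a set $\mathscr{R}$ of $k$ pairs of words over $\mathscr{A}$ (its relations); an ordered monoid presentation is the same except that $\mathscr{R}$ is a sequence of $k$ pairs of words. The monoid presented is $\mathscr{A}^*$ modulo the smallest congruence containing the relations. The sum relation length is the total length of all words forming sides of relations; the maximum relation length is the length of the longest such word. *)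

theory Defs
  imports Complex_Main "HOL-Algebra.Group"
begin

inductive_set pres_cong :: "'a set \<Rightarrow> ('a list \<times> 'a list) set \<Rightarrow> ('a list \<times> 'a list) set"
  for A :: "'a set" and R :: "('a list \<times> 'a list) set" where
  rel:   "(u, v) \<in> R \<Longrightarrow> (u, v) \<in> pres_cong A R"
| refl:  "w \<in> lists A \<Longrightarrow> (w, w) \<in> pres_cong A R"
| sym:   "(u, v) \<in> pres_cong A R \<Longrightarrow> (v, u) \<in> pres_cong A R"
| trans: "(u, v) \<in> pres_cong A R \<Longrightarrow> (v, w) \<in> pres_cong A R \<Longrightarrow> (u, w) \<in> pres_cong A R"
| ctxt:  "(u, v) \<in> pres_cong A R \<Longrightarrow> x \<in> lists A \<Longrightarrow> y \<in> lists A
          \<Longrightarrow> (x @ u @ y, x @ v @ y) \<in> pres_cong A R"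

definition presented_monoid :: "'a set \<Rightarrow> ('a list \<times> 'a list) set \<Rightarrow> ('a list set) monoid" where
  "presented_monoid A R =
     \<lparr> carrier = lists A // pres_cong A R,
       mult = (\<lambda>X Y. \<Union>u\<in>X. \<Union>v\<in>Y. pres_cong A R `` {u @ v}),
       one = pres_cong A R `` {[]} \<rparr>"

definition iso_closed_class :: "('b monoid \<Rightarrow> bool) \<Rightarrow> bool" where
  "iso_closed_class C \<longleftrightarrow>
     (\<forall>M N. monoid M \<and> monoid N \<and> M \<cong> N \<and> C M \<longrightarrow> C N)"

definition ord_presentations :: "'a set \<Rightarrow> nat \<Rightarrow> ('a list \<times> 'a list) list set" where
  "ord_presentations A k = {rs. length rs = k \<and> set rs \<subseteq> lists A \<times> lists A}"

definition presentations :: "'a set \<Rightarrow> nat \<Rightarrow> ('a list \<times> 'a list) set set" where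
  "presentations A k = {R. finite R \<and> card R = k \<and> R \<subseteq> lists A \<times> lists A}"

definition ord_sum_len :: "('a list \<times> 'a list) list \<Rightarrow> nat" where
  "ord_sum_len rs = (\<Sum>(u, v) \<leftarrow> rs. length u + length v)"

definition ord_max_len :: "('a list \<times> 'a list) list \<Rightarrow> nat" where
  "ord_max_len rs = Max (set (map (\<lambda>(u, v). max (length u) (length v)) rs))"

definition sum_len :: "('a list \<times> 'a list) set \<Rightarrow> nat" where
  "sum_len R = (\<Sum>(u, v) \<in> R. length u + length v)"

definition max_len :: "('a list \<times> 'a list) set \<Rightarrow> nat" where
  "max_len R = Max ((\<lambda>(u, v). max (length u) (length v)) ` R)"

definition ord_proportion ::
  "('a list set monoid \<Rightarrow> bool) \<Rightarrow> 'a set \<Rightarrow> nat \<Rightarrow> (('a list \<times> 'a list) list \<Rightarrow> nat) \<Rightarrow> nat \<Rightarrow> real" where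
  "ord_proportion C A k len n =
     real (card {rs \<in> ord_presentations A k. len rs = n \<and> C (presented_monoid A (set rs))})
     / real (card {rs \<in> ord_presentations A k. len rs = n})"

definition proportion ::
  "('a list set monoid \<Rightarrow> bool) \<Rightarrow> 'a set \<Rightarrow> nat \<Rightarrow> (('a list \<times> 'a list) set \<Rightarrow> nat) \<Rightarrow> nat \<Rightarrow> real" where
  "proportion C A k len n =
     real (card {R \<in> presentations A k. len R = n \<and> C (presented_monoid A R)})
     / real (card {R \<in> presentations A k. len R = n})"

end

theory Submission
  imports Defs "HOL-Combinatorics.Multiset_Permutations"
begin

(* An ordered presentation with k distinct relations is one of exactly k! orderings of an
   unordered presentation with the same sum and maximum relation length, and it presents the
   same monoid. So the two proportions can differ only through the ordered presentations with a
   repeated relation, and by at most their share among all ordered presentations. Deleting the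
   second copy of a repeated relation is injective once the two positions are fixed, so there
   are at most k^2 times as many of them as sequences of k - 1 relations of length at most n,
   and counting shows that this is O(1/n) of all ordered presentations of length n: by sum
   length there are |A|^n (n+2k-1 choose n) of them, by maximum length w_n^(2k) - w_(n-1)^(2k)
   where w_n = 1 + |A| + ... + |A|^n. No property of the class C is needed. *)

section \<open>Ordered versus unordered presentations\<close>

lemma card_ratio_diff_le:
  assumes "finite T" "D \<subseteq> T"
  shows "\<bar>card (T \<inter> G) / card T - card (D \<inter> G) / card D\<bar> \<le> card (T - D) / card T"
proof (cases "D = {}")
  case True
  then show ?thesis
    using assms by (simp add: card_mono card_gt_0_iff divide_le_eq_1)
next
  case False
  define t e d g b where "t = real (card T)" and "e = real (card (T \<inter> G))"
    and "d = real (card D)" and "g = real (card (D \<inter> G))" and "b = real (card (T - D))"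
  have fin: "finite D" using assms finite_subset by blast
  have "d > 0" using False fin by (simp add: d_def card_gt_0_iff)
  have t: "t = d + b" using assms fin by (simp add: t_def d_def b_def card_Diff_subset card_mono)
  have "g \<le> e" using assms by (auto simp: g_def e_def intro!: card_mono)
  moreover have "e \<le> g + b"
  proof -
    have "T \<inter> G \<subseteq> (D \<inter> G) \<union> (T - D)" by blast
    then have "card (T \<inter> G) \<le> card (D \<inter> G) + card (T - D)"
      using assms fin by (meson card_Un_le card_mono finite_Diff finite_Un finite_Int order_trans)
    then show ?thesis by (simp add: e_def g_def b_def)
  qed
  moreover have "g \<le> d" using fin by (simp add: g_def d_def card_mono)
  ultimately have "e * d \<le> (g + b) * d" "g * d \<le> e * d" "g * b \<le> d * b" "0 \<le> g * b"
    using \<open>d > 0\<close> by (simp_all add: mult_right_mono b_def g_def)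
  then have "\<bar>e * d - g * t\<bar> \<le> b * d" unfolding t by (simp add: abs_le_iff algebra_simps)
  moreover have "t > 0" using \<open>d > 0\<close> t by (simp add: b_def)
  ultimately have "\<bar>e * d - g * t\<bar> / (t * d) \<le> b * d / (t * d)"
    using \<open>d > 0\<close> by (intro divide_right_mono) auto
  moreover have "e / t - g / d = (e * d - g * t) / (t * d)"
    using \<open>d > 0\<close> \<open>t > 0\<close> by (simp add: field_simps)
  ultimately have "\<bar>e / t - g / d\<bar> \<le> b / t"
    using \<open>d > 0\<close> \<open>t > 0\<close> by (simp add: abs_divide)
  then show ?thesis by (simp add: t_def e_def d_def g_def b_def)
qed

lemma card_distinct_lists_with_set_in:
  assumes "\<And>R. R \<in> S \<Longrightarrow> finite R \<and> card R = k"
  shows "card {xs. distinct xs \<and> set xs \<in> S} = fact k * card S"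
proof -
  have lists: "{xs. distinct xs \<and> set xs \<in> S} = (\<Union>R\<in>S. permutations_of_set R)"
    by (auto simp: permutations_of_set_def)
  show ?thesis
  proof (cases "finite S")
    case True
    have "card (\<Union>R\<in>S. permutations_of_set R) = (\<Sum>R\<in>S. card (permutations_of_set R))"
      using True assms by (intro card_UN_disjoint) (auto dest: permutations_of_setD)
    also have "\<dots> = fact k * card S" using assms by simp
    finally show ?thesis unfolding lists .
  next
    case False
    have "set ` (\<Union>R\<in>S. permutations_of_set R) = S"
      using assms by (force simp: permutations_of_set_def dest: finite_distinct_list)
    then have "infinite (\<Union>R\<in>S. permutations_of_set R)" using False by (metis finite_imageI)
    then show ?thesis using False unfolding lists by simp
  qed
qed

lemma ord_proportion_diff_le:
  fixes lO :: "('a list \<times> 'a list) list \<Rightarrow> nat" and lS :: "('a list \<times> 'a list) set \<Rightarrow> nat"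
  assumes fin: "finite {rs \<in> ord_presentations A k. lO rs = n}"
    and len: "\<And>rs. rs \<in> ord_presentations A k \<Longrightarrow> distinct rs \<Longrightarrow> lS (set rs) = lO rs"
  shows "\<bar>ord_proportion C A k lO n - proportion C A k lS n\<bar> \<le>
    card {rs \<in> ord_presentations A k. lO rs = n \<and> \<not> distinct rs}
      / card {rs \<in> ord_presentations A k. lO rs = n}"
proof -
  define T where "T = {rs \<in> ord_presentations A k. lO rs = n}"
  define D where "D = {rs \<in> T. distinct rs}"
  define G where "G = {rs. C (presented_monoid A (set rs))}"
  define S where "S = {R \<in> presentations A k. lS R = n}"
  have distinct_lists: "{rs \<in> D. Q (set rs)} = {xs. distinct xs \<and> set xs \<in> {R \<in> S. Q R}}" for Q
    using len
    by (auto simp: D_def T_def S_def presentations_def ord_presentations_def distinct_card)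
  have sets_of_card_k: "R \<in> S \<Longrightarrow> finite R \<and> card R = k" for R
    by (simp add: S_def presentations_def)
  have "card (D \<inter> G) = card {xs. distinct xs \<and> set xs \<in> {R \<in> S. C (presented_monoid A R)}}"
    using distinct_lists[of "\<lambda>R. C (presented_monoid A R)"] by (simp add: G_def Int_def)
  also have "\<dots> = fact k * card {R \<in> S. C (presented_monoid A R)}"
    using sets_of_card_k by (intro card_distinct_lists_with_set_in) auto
  finally have "card (D \<inter> G) = fact k * card {R \<in> S. C (presented_monoid A R)}" .
  moreover have "card D = fact k * card S"
    using distinct_lists[of "\<lambda>_. True"] card_distinct_lists_with_set_in[OF sets_of_card_k] by simp
  ultimately have "card (D \<inter> G) / card D = proportion C A k lS n"
    by (simp add: proportion_def S_def)
  moreover have "T - D = {rs \<in> ord_presentations A k. lO rs = n \<and> \<not> distinct rs}"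
    by (auto simp: T_def D_def)
  moreover have "card (T \<inter> G) / card T = ord_proportion C A k lO n"
    by (simp add: ord_proportion_def T_def G_def Int_def conj_ac)
  moreover have "\<bar>card (T \<inter> G) / card T - card (D \<inter> G) / card D\<bar> \<le> card (T - D) / card T"
    using fin by (intro card_ratio_diff_le) (auto simp: T_def D_def)
  ultimately show ?thesis by (simp add: T_def)
qed

lemma ratio_tendsto_zero:
  fixes b t :: "nat \<Rightarrow> nat"
  assumes "\<forall>\<^sub>F n in sequentially. b n * (n + 1) \<le> c * t n"
  shows "(\<lambda>n. real (b n) / real (t n)) \<longlonglongrightarrow> 0"
proof (rule tendsto_0_le[OF LIMSEQ_inverse_real_of_nat])
  show "\<forall>\<^sub>F n in sequentially. norm (b n / t n) \<le> norm (inverse (real (Suc n))) * c"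
    using assms
  proof eventually_elim
    case (elim n)
    then have "real (b n) * (n + 1) \<le> c * t n"
      by (metis of_nat_add of_nat_1 of_nat_mono of_nat_mult)
    then show ?case by (cases "t n = 0") (simp_all add: divide_simps mult.commute)
  qed
qed

lemma ord_proportion_diff_tendsto_zero:
  fixes lO :: "('a list \<times> 'a list) list \<Rightarrow> nat" and lS :: "('a list \<times> 'a list) set \<Rightarrow> nat"
  assumes "\<And>n. finite {rs \<in> ord_presentations A k. lO rs = n}"
    and "\<And>rs. rs \<in> ord_presentations A k \<Longrightarrow> distinct rs \<Longrightarrow> lS (set rs) = lO rs"
    and "\<forall>\<^sub>F n in sequentially.
           card {rs \<in> ord_presentations A k. lO rs = n \<and> \<not> distinct rs} * (n + 1)
             \<le> c * card {rs \<in> ord_presentations A k. lO rs = n}"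
  shows "(\<lambda>n. ord_proportion C A k lO n - proportion C A k lS n) \<longlonglongrightarrow> 0"
proof (rule tendsto_0_le[OF ratio_tendsto_zero[OF assms(3)], where K = 1])
  show "\<forall>\<^sub>F n in sequentially. norm (ord_proportion C A k lO n - proportion C A k lS n)
      \<le> norm (real (card {rs \<in> ord_presentations A k. lO rs = n \<and> \<not> distinct rs})
               / real (card {rs \<in> ord_presentations A k. lO rs = n})) * 1"
    using ord_proportion_diff_le[OF assms(1,2)] by simp
qed

section \<open>Repeated relations\<close>

lemma distinct_if_length_less_2: "length xs < 2 \<Longrightarrow> distinct xs"
  by (cases xs) auto

definition remove_nth :: "nat \<Rightarrow> 'b list \<Rightarrow> 'b list" where
  "remove_nth j xs = take j xs @ drop (Suc j) xs"

lemma length_remove_nth: "j < length xs \<Longrightarrow> length (remove_nth j xs) = length xs - 1"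
  by (simp add: remove_nth_def)

lemma set_remove_nth_subset: "set (remove_nth j xs) \<subseteq> set xs"
  unfolding remove_nth_def using set_take_subset set_drop_subset by fastforce

lemma remove_nth_inj_on_repeats:
  assumes "i < j" "j < length xs" "length ys = length xs"
    and "xs ! i = xs ! j" "ys ! i = ys ! j" "remove_nth j xs = remove_nth j ys"
  shows "xs = ys"
proof -
  have take: "take j xs = take j ys" and drop: "drop (Suc j) xs = drop (Suc j) ys"
    using assms(2,3,6) by (simp_all add: remove_nth_def append_eq_append_conv)
  have "xs ! j = ys ! j" using take assms(1,4,5) by (metis nth_take)
  then show ?thesis using take drop assms(2,3) by (metis id_take_nth_drop)
qed

lemma card_nondistinct_le:
  assumes "finite B" "finite Y" and len: "\<And>xs. xs \<in> B \<Longrightarrow> length xs = k"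
    and remove: "\<And>xs i j. xs \<in> B \<Longrightarrow> i < j \<Longrightarrow> j < k \<Longrightarrow> xs ! i = xs ! j
                   \<Longrightarrow> remove_nth j xs \<in> Y"
  shows "card {xs \<in> B. \<not> distinct xs} \<le> k\<^sup>2 * card Y"
proof -
  define repeats where "repeats = (\<lambda>(i, j). {xs \<in> B. i < j \<and> xs ! i = xs ! j})"
  have "{xs \<in> B. \<not> distinct xs} \<subseteq> (\<Union>p\<in>{..<k} \<times> {..<k}. repeats p)"
  proof
    fix xs assume "xs \<in> {xs \<in> B. \<not> distinct xs}"
    then obtain i j where "xs \<in> B" "i < j" "j < k" "xs ! i = xs ! j"
      using len by (simp add: distinct_conv_nth) (metis linorder_neqE_nat)
    then have "(i, j) \<in> {..<k} \<times> {..<k}" "xs \<in> repeats (i, j)"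
      by (auto simp: repeats_def)
    then show "xs \<in> (\<Union>p\<in>{..<k} \<times> {..<k}. repeats p)" by blast
  qed
  then have "card {xs \<in> B. \<not> distinct xs} \<le> card (\<Union>p\<in>{..<k} \<times> {..<k}. repeats p)"
    using assms(1) by (intro card_mono) (auto simp: repeats_def)
  also have "\<dots> \<le> (\<Sum>p\<in>{..<k} \<times> {..<k}. card (repeats p))"
    by (rule card_UN_le) simp
  also have "\<dots> \<le> (\<Sum>p\<in>{..<k} \<times> {..<k}. card Y)"
  proof (rule sum_mono)
    fix p assume "p \<in> {..<k} \<times> {..<k}"
    then obtain i j where p: "p = (i, j)" "j < k" by auto
    have "inj_on (remove_nth j) (repeats p)"
    proof (rule inj_onI)
      fix xs ys assume "xs \<in> repeats p" "ys \<in> repeats p" "remove_nth j xs = remove_nth j ys"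
      then show "xs = ys"
        using p len remove_nth_inj_on_repeats[of i j xs ys] by (auto simp: repeats_def)
    qed
    moreover have "remove_nth j ` repeats p \<subseteq> Y" using p remove by (auto simp: repeats_def)
    ultimately show "card (repeats p) \<le> card Y" using assms(2) by (rule card_inj_on_le)
  qed
  also have "\<dots> = k\<^sup>2 * card Y" by (simp add: power2_eq_square)
  finally show ?thesis .
qed

section \<open>Counting by sum relation length\<close>

lemma sum_power_less_power_Suc:
  fixes m :: nat
  assumes "m \<ge> 2"
  shows "(\<Sum>i\<le>n. m ^ i) < m ^ Suc n"
proof (induction n)
  case (Suc n)
  have "2 * m ^ Suc n \<le> m * m ^ Suc n" using assms by (rule mult_le_mono1)
  then show ?case using Suc.IH by (simp only: sum.atMost_Suc power_Suc[of m "Suc n"])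
qed (use assms in simp)

lemma sum_power_le_twice_power:
  fixes m :: nat
  assumes "m \<ge> 2"
  shows "(\<Sum>i\<le>n. m ^ i) \<le> 2 * m ^ n"
proof (cases n)
  case (Suc n')
  then show ?thesis using sum_power_less_power_Suc[OF assms, of n'] by simp
qed simp

lemma sum_weighted_choose:
  "(\<Sum>l\<le>n. (l + 1) * ((n - l + r) choose (n - l))) = (n + r + 2) choose n"
proof -
  have reflected: "(\<Sum>j\<le>n. (n + 1 - j) * ((r + j) choose j)) = (n + r + 2) choose n" for n
  proof (induction n)
    case (Suc n)
    have "(\<Sum>j\<le>Suc n. (Suc n + 1 - j) * ((r + j) choose j))
        = (\<Sum>j\<le>Suc n. (n + 1 - j) * ((r + j) choose j)) + (\<Sum>j\<le>Suc n. (r + j) choose j)"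
      by (simp add: sum.distrib[symmetric] Suc_diff_le algebra_simps)
    also have "(\<Sum>j\<le>Suc n. (n + 1 - j) * ((r + j) choose j)) = (n + r + 2) choose n"
      using Suc.IH by simp
    also have "(\<Sum>j\<le>Suc n. (r + j) choose j) = Suc (r + Suc n) choose Suc n"
      by (rule sum_choose_lower)
    finally show ?case by (simp add: add_ac)
  qed simp
  have "(\<Sum>l\<le>n. (l + 1) * ((n - l + r) choose (n - l)))
      = (\<Sum>j\<le>n. (n + 1 - j) * ((r + j) choose j))"
    by (rule sum.reindex_bij_witness[of _ "\<lambda>j. n - j" "\<lambda>l. n - l"]) (auto simp: add.commute)
  also have "\<dots> = (n + r + 2) choose n" by (rule reflected)
  finally show ?thesis .
qed

lemma Suc_mult_choose_le: "(n + 1) * ((n + r) choose r) \<le> (r + 1) * ((n + r + 2) choose (r + 2))"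
proof -
  have "(n + 1) * ((n + r) choose r) \<le> (r + 1) * ((n + r + 1) choose (r + 1))"
    using Suc_times_binomial[of r "n + r"] by simp
  also have "\<dots> \<le> (r + 1) * ((n + r + 2) choose (r + 2))"
    using binomial_Suc_Suc[of "n + r + 1" "r + 1"] by (intro mult_le_mono2) simp
  finally show ?thesis .
qed

definition word_pairs_of_len :: "'a set \<Rightarrow> nat \<Rightarrow> ('a list \<times> 'a list) set" where
  "word_pairs_of_len A l = {(u, v). u \<in> lists A \<and> v \<in> lists A \<and> length u + length v = l}"

lemma mem_word_pairs_of_len [simp]:
  "(u, v) \<in> word_pairs_of_len A l \<longleftrightarrow> u \<in> lists A \<and> v \<in> lists A \<and> length u + length v = l"
  by (simp add: word_pairs_of_len_def)

lemma word_pairs_of_len_eq: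
  "word_pairs_of_len A l
     = (\<Union>i\<le>l. {u. set u \<subseteq> A \<and> length u = i} \<times> {v. set v \<subseteq> A \<and> length v = l - i})"
  by (auto simp: word_pairs_of_len_def)

lemma finite_word_pairs_of_len: "finite A \<Longrightarrow> finite (word_pairs_of_len A l)"
  unfolding word_pairs_of_len_eq
  by (intro finite_UN_I finite_cartesian_product finite_lists_length_eq) auto

lemma card_word_pairs_of_len:
  assumes "finite A"
  shows "card (word_pairs_of_len A l) = (l + 1) * card A ^ l"
proof -
  have "card (word_pairs_of_len A l)
      = (\<Sum>i\<le>l. card ({u. set u \<subseteq> A \<and> length u = i} \<times> {v. set v \<subseteq> A \<and> length v = l - i}))"
    unfolding word_pairs_of_len_eq using assms
    by (intro card_UN_disjoint) (auto simp: finite_lists_length_eq)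
  also have "\<dots> = (\<Sum>i\<le>l. card A ^ l)"
    using assms
    by (intro sum.cong) (simp_all add: card_cartesian_product card_lists_length_eq flip: power_add)
  finally show ?thesis by simp
qed

definition ord_pres_of_sum_len :: "'a set \<Rightarrow> nat \<Rightarrow> nat \<Rightarrow> ('a list \<times> 'a list) list set" where
  "ord_pres_of_sum_len A k n = {rs \<in> ord_presentations A k. ord_sum_len rs = n}"

lemma ord_sum_len_Nil [simp]: "ord_sum_len [] = 0"
  by (simp add: ord_sum_len_def)

lemma ord_sum_len_Cons [simp]: "ord_sum_len ((u, v) # rs) = length u + length v + ord_sum_len rs"
  by (simp add: ord_sum_len_def)

lemma ord_sum_len_append [simp]: "ord_sum_len (rs @ ts) = ord_sum_len rs + ord_sum_len ts"
  by (simp add: ord_sum_len_def)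

lemma ord_sum_len_remove_nth_le: "ord_sum_len (remove_nth j rs) \<le> ord_sum_len rs"
proof -
  have "ord_sum_len (tl ts) \<le> ord_sum_len ts" for ts
    by (cases ts) (auto simp: ord_sum_len_def)
  then have "ord_sum_len (drop (Suc j) rs) \<le> ord_sum_len (drop j rs)"
    by (metis drop_Suc tl_drop)
  then show ?thesis
    by (subst (2) append_take_drop_id[of j, symmetric])
      (simp add: remove_nth_def del: append_take_drop_id)
qed

lemma ord_pres_of_sum_len_0: "ord_pres_of_sum_len A 0 n = (if n = 0 then {[]} else {})"
  by (auto simp: ord_pres_of_sum_len_def ord_presentations_def)

lemma ord_pres_of_sum_len_Suc:
  "ord_pres_of_sum_len A (Suc k) n
     = (\<Union>l\<le>n. (\<lambda>(r, rs). r # rs) ` (word_pairs_of_len A l \<times> ord_pres_of_sum_len A k (n - l)))"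
proof (intro equalityI subsetI)
  fix rs assume rs: "rs \<in> ord_pres_of_sum_len A (Suc k) n"
  then obtain u v ts where "rs = (u, v) # ts"
    by (auto simp: ord_pres_of_sum_len_def ord_presentations_def length_Suc_conv)
  with rs show "rs \<in> (\<Union>l\<le>n. (\<lambda>(r, rs). r # rs) `
                   (word_pairs_of_len A l \<times> ord_pres_of_sum_len A k (n - l)))"
    by (auto simp: ord_pres_of_sum_len_def ord_presentations_def
        intro!: bexI[of _ "length u + length v"] image_eqI[of _ _ "((u, v), ts)"])
qed (auto simp: ord_pres_of_sum_len_def ord_presentations_def; blast)

lemma finite_ord_pres_of_sum_len: "finite A \<Longrightarrow> finite (ord_pres_of_sum_len A k n)"
proof (induction k arbitrary: n)
  case 0
  then show ?case by (simp add: ord_pres_of_sum_len_0)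
next
  case (Suc k)
  then show ?case
    unfolding ord_pres_of_sum_len_Suc
    by (intro finite_UN_I finite_imageI finite_cartesian_product finite_word_pairs_of_len) auto
qed

lemma card_ord_pres_of_sum_len_Suc:
  assumes "finite A"
  shows "card (ord_pres_of_sum_len A (Suc k) n)
           = (\<Sum>l\<le>n. card (word_pairs_of_len A l) * card (ord_pres_of_sum_len A k (n - l)))"
proof -
  have inj: "inj_on (\<lambda>(r, rs). r # rs) X"
    for X :: "(('a list \<times> 'a list) \<times> ('a list \<times> 'a list) list) set"
    by (auto simp: inj_on_def)
  have "card (ord_pres_of_sum_len A (Suc k) n)
      = (\<Sum>l\<le>n. card ((\<lambda>(r, rs). r # rs) `
                  (word_pairs_of_len A l \<times> ord_pres_of_sum_len A k (n - l))))"
    unfolding ord_pres_of_sum_len_Suc using assms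
    by (intro card_UN_disjoint)
      (auto intro!: finite_imageI finite_cartesian_product finite_word_pairs_of_len
        finite_ord_pres_of_sum_len)
  then show ?thesis by (simp add: card_image[OF inj] card_cartesian_product)
qed

lemma card_ord_pres_of_sum_len:
  assumes "finite A"
  shows "card (ord_pres_of_sum_len A (Suc k) n) = card A ^ n * ((n + 2 * k + 1) choose n)"
proof (induction k arbitrary: n)
  case 0
  have "card (ord_pres_of_sum_len A (Suc 0) n)
      = (\<Sum>l\<le>n. card (word_pairs_of_len A l) * card (ord_pres_of_sum_len A 0 (n - l)))"
    by (rule card_ord_pres_of_sum_len_Suc[OF assms])
  also have "\<dots> = (\<Sum>l\<le>n. if l = n then card (word_pairs_of_len A l) else 0)"
    by (intro sum.cong) (auto simp: ord_pres_of_sum_len_0)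
  finally show ?case using card_word_pairs_of_len[OF assms] by simp
next
  case (Suc k)
  have "card (ord_pres_of_sum_len A (Suc (Suc k)) n)
      = (\<Sum>l\<le>n. card A ^ n * ((l + 1) * ((n - l + (2 * k + 1)) choose (n - l))))"
    unfolding card_ord_pres_of_sum_len_Suc[OF assms, of "Suc k"]
  proof (intro sum.cong HOL.refl)
    fix l assume "l \<in> {..n}"
    then have "card A ^ l * card A ^ (n - l) = card A ^ n" by (simp flip: power_add)
    then show "card (word_pairs_of_len A l) * card (ord_pres_of_sum_len A (Suc k) (n - l))
        = card A ^ n * ((l + 1) * ((n - l + (2 * k + 1)) choose (n - l)))"
      unfolding Suc.IH card_word_pairs_of_len[OF assms]
      by (simp add: algebra_simps flip: \<open>card A ^ l * card A ^ (n - l) = card A ^ n\<close>)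
  qed
  also have "\<dots> = card A ^ n * ((n + (2 * k + 1) + 2) choose n)"
    by (simp only: sum_distrib_left[symmetric] sum_weighted_choose)
  finally show ?case by (simp add: algebra_simps)
qed

lemma card_UN_ord_pres_of_sum_len_le:
  assumes "finite A" "card A \<ge> 2"
  shows "card (\<Union>s\<le>n. ord_pres_of_sum_len A (Suc k) s)
           \<le> 2 * card A ^ n * ((n + 2 * k + 1) choose (2 * k + 1))"
proof -
  have "card (\<Union>s\<le>n. ord_pres_of_sum_len A (Suc k) s)
      \<le> (\<Sum>s\<le>n. card (ord_pres_of_sum_len A (Suc k) s))"
    by (rule card_UN_le) simp
  also have "\<dots> \<le> (\<Sum>s\<le>n. card A ^ s * ((n + 2 * k + 1) choose (2 * k + 1)))"
  proof (rule sum_mono)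
    fix s assume "s \<in> {..n}"
    have "(s + 2 * k + 1) choose s = (s + 2 * k + 1) choose (2 * k + 1)"
      using binomial_symmetric[of s "s + 2 * k + 1"] by simp
    also have "\<dots> \<le> (n + 2 * k + 1) choose (2 * k + 1)"
      using \<open>s \<in> {..n}\<close> by (intro binomial_right_mono) simp
    finally have binom: "(s + 2 * k + 1) choose s \<le> (n + 2 * k + 1) choose (2 * k + 1)" .
    have "card (ord_pres_of_sum_len A (Suc k) s) = card A ^ s * ((s + 2 * k + 1) choose s)"
      by (rule card_ord_pres_of_sum_len[OF assms(1)])
    also have "\<dots> \<le> card A ^ s * ((n + 2 * k + 1) choose (2 * k + 1))"
      using binom by (rule mult_le_mono2)
    finally show "card (ord_pres_of_sum_len A (Suc k) s)
        \<le> card A ^ s * ((n + 2 * k + 1) choose (2 * k + 1))" .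
  qed
  also have "\<dots> \<le> 2 * card A ^ n * ((n + 2 * k + 1) choose (2 * k + 1))"
    using sum_power_le_twice_power[OF assms(2), of n] by (simp add: sum_distrib_right[symmetric])
  finally show ?thesis .
qed

lemma card_nondistinct_ord_pres_of_sum_len_le:
  assumes "finite A" "card A \<ge> 2"
  shows "card {rs \<in> ord_pres_of_sum_len A k n. \<not> distinct rs} * (n + 1)
           \<le> 4 * k ^ 3 * card (ord_pres_of_sum_len A k n)"
proof (cases "k < 2")
  case True
  then have no_repeats: "{rs \<in> ord_pres_of_sum_len A k n. \<not> distinct rs} = {}"
    by (auto simp: ord_pres_of_sum_len_def ord_presentations_def intro: distinct_if_length_less_2)
  show ?thesis unfolding no_repeats by simp
next
  case False
  then obtain j where k: "k = Suc (Suc j)" by (metis add_2_eq_Suc le_Suc_ex not_less)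
  define r where "r = 2 * j + 1"
  define Y where "Y = (\<Union>s\<le>n. ord_pres_of_sum_len A (Suc j) s)"
  have nondistinct: "card {rs \<in> ord_pres_of_sum_len A k n. \<not> distinct rs} \<le> k\<^sup>2 * card Y"
  proof (rule card_nondistinct_le)
    show "finite (ord_pres_of_sum_len A k n)" "finite Y"
      using assms by (simp_all add: Y_def finite_ord_pres_of_sum_len)
  next
    fix rs i l assume "rs \<in> ord_pres_of_sum_len A k n" "l < k"
    then show "remove_nth l rs \<in> Y"
      using length_remove_nth[of l rs] set_remove_nth_subset[of l rs]
        ord_sum_len_remove_nth_le[of l rs]
      by (auto simp: Y_def k ord_pres_of_sum_len_def ord_presentations_def)
  qed (simp add: ord_pres_of_sum_len_def ord_presentations_def)
  have Y: "card Y \<le> 2 * card A ^ n * ((n + r) choose r)"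
    using card_UN_ord_pres_of_sum_len_le[OF assms] by (simp add: Y_def r_def add.assoc)
  have "card (ord_pres_of_sum_len A k n) = card A ^ n * ((n + r + 2) choose n)"
    using card_ord_pres_of_sum_len[OF assms(1), of "Suc j" n] by (simp add: k r_def algebra_simps)
  also have "(n + r + 2) choose n = (n + r + 2) choose (r + 2)"
    using binomial_symmetric[of n "n + r + 2"] by (simp del: binomial_Suc_Suc)
  finally have total:
    "card (ord_pres_of_sum_len A k n) = card A ^ n * ((n + r + 2) choose (r + 2))" .
  from nondistinct Y have "card {rs \<in> ord_pres_of_sum_len A k n. \<not> distinct rs}
      \<le> k\<^sup>2 * (2 * card A ^ n * ((n + r) choose r))"
    by (meson le_trans mult_le_mono2)
  then have "card {rs \<in> ord_pres_of_sum_len A k n. \<not> distinct rs} * (n + 1)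
      \<le> k\<^sup>2 * (2 * card A ^ n * ((n + r) choose r)) * (n + 1)"
    by (rule mult_le_mono1)
  also have "\<dots> = 2 * k\<^sup>2 * card A ^ n * ((n + 1) * ((n + r) choose r))"
    by (simp only: ac_simps)
  also have "\<dots> \<le> 2 * k\<^sup>2 * card A ^ n * ((r + 1) * ((n + r + 2) choose (r + 2)))"
    using Suc_mult_choose_le by (rule mult_le_mono2)
  also have "\<dots> = 2 * k\<^sup>2 * (r + 1) * card (ord_pres_of_sum_len A k n)"
    unfolding total by (simp only: ac_simps)
  also have "\<dots> \<le> 2 * k\<^sup>2 * (2 * k) * card (ord_pres_of_sum_len A k n)"
    by (intro mult_le_mono1 mult_le_mono2) (simp add: r_def k)
  also have "\<dots> = 4 * k ^ 3 * card (ord_pres_of_sum_len A k n)"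
    by (simp add: power2_eq_square power3_eq_cube)
  finally show ?thesis .
qed

section \<open>Counting by maximum relation length\<close>

definition bounded_word_pairs :: "'a set \<Rightarrow> nat \<Rightarrow> ('a list \<times> 'a list) set" where
  "bounded_word_pairs A n = {u. set u \<subseteq> A \<and> length u \<le> n} \<times> {v. set v \<subseteq> A \<and> length v \<le> n}"

definition ord_pres_of_max_len_le :: "'a set \<Rightarrow> nat \<Rightarrow> nat \<Rightarrow> ('a list \<times> 'a list) list set" where
  "ord_pres_of_max_len_le A k n = {rs. set rs \<subseteq> bounded_word_pairs A n \<and> length rs = k}"

lemma finite_bounded_word_pairs: "finite A \<Longrightarrow> finite (bounded_word_pairs A n)"
  unfolding bounded_word_pairs_def by (intro finite_cartesian_product finite_lists_length_le)

lemma card_bounded_word_pairs: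
  "finite A \<Longrightarrow> card (bounded_word_pairs A n) = (\<Sum>i\<le>n. card A ^ i) ^ 2"
  unfolding bounded_word_pairs_def
  by (simp add: card_cartesian_product card_lists_length_le power2_eq_square)

lemma bounded_word_pairs_mono: "m \<le> n \<Longrightarrow> bounded_word_pairs A m \<subseteq> bounded_word_pairs A n"
  by (auto simp: bounded_word_pairs_def)

lemma finite_ord_pres_of_max_len_le: "finite A \<Longrightarrow> finite (ord_pres_of_max_len_le A k n)"
  unfolding ord_pres_of_max_len_le_def by (intro finite_lists_length_eq finite_bounded_word_pairs)

lemma card_ord_pres_of_max_len_le:
  "finite A \<Longrightarrow> card (ord_pres_of_max_len_le A k n) = (\<Sum>i\<le>n. card A ^ i) ^ (2 * k)"
  unfolding ord_pres_of_max_len_le_def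
  by (simp add: card_lists_length_eq finite_bounded_word_pairs card_bounded_word_pairs power_mult)

lemma ord_pres_of_max_len_le_mono:
  "m \<le> n \<Longrightarrow> ord_pres_of_max_len_le A k m \<subseteq> ord_pres_of_max_len_le A k n"
  using bounded_word_pairs_mono by (fastforce simp: ord_pres_of_max_len_le_def)

(* k > 0 is needed since ord_max_len [] = Max {} is unspecified. *)
lemma ord_max_len_le_iff:
  assumes "rs \<in> ord_presentations A k" "k > 0"
  shows "ord_max_len rs \<le> n \<longleftrightarrow> rs \<in> ord_pres_of_max_len_le A k n"
proof -
  have "rs \<noteq> []" using assms by (auto simp: ord_presentations_def)
  then have "ord_max_len rs \<le> n \<longleftrightarrow> (\<forall>(u, v)\<in>set rs. length u \<le> n \<and> length v \<le> n)"
    by (auto simp: ord_max_len_def)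
  then show ?thesis
    using assms(1)
    by (auto simp: ord_presentations_def ord_pres_of_max_len_le_def bounded_word_pairs_def
        in_lists_conv_set subset_iff)
qed

lemma ord_presentations_of_max_len_Suc:
  assumes "k > 0"
  shows "{rs \<in> ord_presentations A k. ord_max_len rs = Suc n}
           = ord_pres_of_max_len_le A k (Suc n) - ord_pres_of_max_len_le A k n"
proof -
  have "ord_pres_of_max_len_le A k m \<subseteq> ord_presentations A k" for m
    by (auto simp: ord_pres_of_max_len_le_def bounded_word_pairs_def ord_presentations_def
        in_lists_conv_set subset_iff)
  moreover have "ord_max_len rs = Suc n \<longleftrightarrow> ord_max_len rs \<le> Suc n \<and> \<not> ord_max_len rs \<le> n"
    for rs
    by auto
  ultimately show ?thesis
    using ord_max_len_le_iff[OF _ assms] by blast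
qed

lemma twice_power_sum_power_le:
  fixes m :: nat
  assumes "m \<ge> 2" "k > 0"
  shows "2 * (\<Sum>i\<le>n. m ^ i) ^ k \<le> (\<Sum>i\<le>Suc n. m ^ i) ^ k"
proof -
  have "2 * (\<Sum>i\<le>n. m ^ i) \<le> (\<Sum>i\<le>Suc n. m ^ i)"
    using sum_power_less_power_Suc[OF assms(1), of n] by simp
  then have "2 ^ k * (\<Sum>i\<le>n. m ^ i) ^ k \<le> (\<Sum>i\<le>Suc n. m ^ i) ^ k"
    by (metis power_mono power_mult_distrib zero_le)
  moreover have "2 \<le> (2::nat) ^ k" using assms(2) by (cases k) auto
  ultimately show ?thesis by (meson le_trans mult_le_mono1)
qed

lemma card_nondistinct_of_max_len_Suc_le:
  assumes "finite A" "card A \<ge> 2"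
  shows "card {rs \<in> ord_presentations A k. ord_max_len rs = Suc n \<and> \<not> distinct rs} * (Suc n + 1)
           \<le> 2 * k\<^sup>2 * card {rs \<in> ord_presentations A k. ord_max_len rs = Suc n}"
proof (cases "k < 2")
  case True
  then have no_repeats:
    "{rs \<in> ord_presentations A k. ord_max_len rs = Suc n \<and> \<not> distinct rs} = {}"
    by (auto simp: ord_presentations_def intro: distinct_if_length_less_2)
  show ?thesis unfolding no_repeats by simp
next
  case False
  then obtain j where k: "k = Suc j" by (cases k) auto
  define w v where "w = (\<Sum>i\<le>Suc n. card A ^ i)" and "v = (\<Sum>i\<le>n. card A ^ i)"
  define T where "T = {rs \<in> ord_presentations A k. ord_max_len rs = Suc n}"
  have T: "T = ord_pres_of_max_len_le A k (Suc n) - ord_pres_of_max_len_le A k n"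
    unfolding T_def using k by (simp add: ord_presentations_of_max_len_Suc)
  have "card {rs \<in> T. \<not> distinct rs} \<le> k\<^sup>2 * card (ord_pres_of_max_len_le A j (Suc n))"
  proof (rule card_nondistinct_le)
    show "finite T" "finite (ord_pres_of_max_len_le A j (Suc n))"
      using assms(1) by (simp_all add: T finite_ord_pres_of_max_len_le)
  next
    fix rs i l assume "rs \<in> T" "l < k"
    then show "remove_nth l rs \<in> ord_pres_of_max_len_le A j (Suc n)"
      using length_remove_nth[of l rs] set_remove_nth_subset[of l rs]
      by (auto simp: T k ord_pres_of_max_len_le_def)
  qed (simp add: T_def ord_presentations_def)
  then have nondistinct: "card {rs \<in> T. \<not> distinct rs} \<le> k\<^sup>2 * w ^ (2 * j)"
    using assms(1) by (simp add: card_ord_pres_of_max_len_le w_def)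
  have "card T = w ^ (2 * k) - v ^ (2 * k)"
    unfolding T using assms(1)
    by (simp add: card_Diff_subset finite_ord_pres_of_max_len_le ord_pres_of_max_len_le_mono
        card_ord_pres_of_max_len_le w_def v_def)
  moreover have "2 * v ^ (2 * k) \<le> w ^ (2 * k)"
    unfolding w_def v_def by (rule twice_power_sum_power_le[OF assms(2)]) (simp add: k)
  ultimately have total: "w ^ (2 * k) \<le> 2 * card T" by simp
  have "Suc n + 1 \<le> w"
    using sum_mono[of "{..Suc n}" "\<lambda>_. 1" "\<lambda>i. card A ^ i"] assms(2) by (simp add: w_def)
  then have "Suc n + 1 \<le> w\<^sup>2" by (simp add: power2_eq_square) (meson le_trans le_square)
  with nondistinct
  have "card {rs \<in> T. \<not> distinct rs} * (Suc n + 1) \<le> k\<^sup>2 * w ^ (2 * j) * w\<^sup>2"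
    by (rule mult_le_mono)
  also have "\<dots> = k\<^sup>2 * w ^ (2 * k)" by (simp add: k power_add[symmetric] mult_2_right)
  also have "\<dots> \<le> 2 * k\<^sup>2 * card T" using total by simp
  finally show ?thesis by (simp add: T_def conj_ac)
qed

lemma ord_proportion_sum_len_diff_tendsto_zero:
  assumes "finite A" "card A \<ge> 2"
  shows "(\<lambda>n. ord_proportion C A k ord_sum_len n - proportion C A k sum_len n) \<longlonglongrightarrow> 0"
proof (rule ord_proportion_diff_tendsto_zero)
  show "finite {rs \<in> ord_presentations A k. ord_sum_len rs = n}" for n
    using finite_ord_pres_of_sum_len[OF assms(1)] by (simp add: ord_pres_of_sum_len_def)
  show "sum_len (set rs) = ord_sum_len rs" if "distinct rs" for rs
    using that by (simp add: sum_len_def ord_sum_len_def sum_list_distinct_conv_sum_set)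
  show "\<forall>\<^sub>F n in sequentially.
      card {rs \<in> ord_presentations A k. ord_sum_len rs = n \<and> \<not> distinct rs} * (n + 1)
        \<le> 4 * k ^ 3 * card {rs \<in> ord_presentations A k. ord_sum_len rs = n}"
    using card_nondistinct_ord_pres_of_sum_len_le[OF assms]
    by (simp add: ord_pres_of_sum_len_def conj_ac)
qed

lemma ord_proportion_max_len_diff_tendsto_zero:
  assumes "finite A" "card A \<ge> 2" "k > 0"
  shows "(\<lambda>n. ord_proportion C A k ord_max_len n - proportion C A k max_len n) \<longlonglongrightarrow> 0"
proof (rule ord_proportion_diff_tendsto_zero)
  show "finite {rs \<in> ord_presentations A k. ord_max_len rs = n}" for n
    using ord_max_len_le_iff[OF _ assms(3)]
    by (intro finite_subset[OF _ finite_ord_pres_of_max_len_le[OF assms(1), of k n]]) auto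
  show "max_len (set rs) = ord_max_len rs" for rs
    by (simp add: max_len_def ord_max_len_def)
  show "\<forall>\<^sub>F n in sequentially.
      card {rs \<in> ord_presentations A k. ord_max_len rs = n \<and> \<not> distinct rs} * (n + 1)
        \<le> 2 * k\<^sup>2 * card {rs \<in> ord_presentations A k. ord_max_len rs = n}"
  proof (rule eventually_sequentiallyI[of 1])
    fix n :: nat assume "n \<ge> 1"
    then obtain m where "n = Suc m" by (cases n) auto
    then show "card {rs \<in> ord_presentations A k. ord_max_len rs = n \<and> \<not> distinct rs} * (n + 1)
        \<le> 2 * k\<^sup>2 * card {rs \<in> ord_presentations A k. ord_max_len rs = n}"
      using card_nondistinct_of_max_len_Suc_le[OF assms(1,2), of k m] by simp
  qed
qed

theorem theorem7:
  fixes C :: "'a list set monoid \<Rightarrow> bool" and A :: "'a set" and k :: nat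
  assumes "iso_closed_class C"
    and "finite A" and "card A \<ge> 2"
    and "k > 0"
  shows "(\<lambda>n. ord_proportion C A k ord_sum_len n - proportion C A k sum_len n) \<longlonglongrightarrow> 0 \<and>
         (\<lambda>n. ord_proportion C A k ord_max_len n - proportion C A k max_len n) \<longlonglongrightarrow> 0"
  using ord_proportion_sum_len_diff_tendsto_zero[OF assms(2,3)]
    ord_proportion_max_len_diff_tendsto_zero[OF assms(2-4)]
  by blast

end
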